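(* Let $P$ be a program and $D$ a conjunction of disequations. Then $D$ succeeds in $P$ iff every ground instance of $D$ holds.
   Context: There are infinite, pairwise disjoint sets of variables, function symbols (with arities) and predicate symbols. Predicate symbols $\mathit{true}$, $=$, $\neq$ are basic, others non-basic. A disequation is an atom $t_1\neq t_2$ with $t_1,t_2$ terms. A goal is a conjunction of atoms ("," associative, neutral element $\mathit{true}$); a clause is $A\leftarrow G$ with $A$ non-basic; a program is a set of clauses. Operational semantics for program $P$: (1) $(t_1=t_2,G)\longmapsto_P G\vartheta$ if $t_1,t_2$ unify with mgu $\vartheta$; (2) $(t_1\neq t_2,G)\longmapsto_P G$ if $t_1,t_2$ are not unifiable; (3) $(A,G)\longmapsto_P(bd(C),G)\vartheta$ for $A$ non-basic, $C$ a renamed apart clause of $P$, $\vartheta$ an mgu of $A$ and the head of $C$. A goal succeeds in $P$ iff there is a derivation from it to $\mathit{true}$. A ground conjunction of disequations holds iff each of its disequations $t_1\neq t_2$ relates two distinct ground terms (the empty conjunction $\mathit{true}$ holds). *)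

theory Defs
  imports Main
begin

(* First-order terms. A function symbol is identified by its name together with
   its arity, the arity being the length of the argument list. *)
datatype ('f, 'v) trm = Var 'v | Fun 'f "('f, 'v) trm list"

type_synonym ('f, 'v) subst = "'v \<Rightarrow> ('f, 'v) trm"

fun subst_trm :: "('f, 'v) subst \<Rightarrow> ('f, 'v) trm \<Rightarrow> ('f, 'v) trm" where
  "subst_trm \<sigma> (Var x) = \<sigma> x"
| "subst_trm \<sigma> (Fun f ts) = Fun f (map (subst_trm \<sigma>) ts)"

fun vars_trm :: "('f, 'v) trm \<Rightarrow> 'v set" where
  "vars_trm (Var x) = {x}"
| "vars_trm (Fun f ts) = (\<Union>t\<in>set ts. vars_trm t)"

definition ground :: "('f, 'v) trm \<Rightarrow> bool" where
  "ground t \<longleftrightarrow> vars_trm t = {}"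

definition subst_comp :: "('f, 'v) subst \<Rightarrow> ('f, 'v) subst \<Rightarrow> ('f, 'v) subst" where
  "subst_comp \<sigma> \<tau> = (\<lambda>x. subst_trm \<tau> (\<sigma> x))"

definition unifier_list :: "('f, 'v) subst \<Rightarrow> ('f, 'v) trm list \<Rightarrow> ('f, 'v) trm list \<Rightarrow> bool" where
  "unifier_list \<sigma> ss ts \<longleftrightarrow> map (subst_trm \<sigma>) ss = map (subst_trm \<sigma>) ts"

definition mgu_list :: "('f, 'v) subst \<Rightarrow> ('f, 'v) trm list \<Rightarrow> ('f, 'v) trm list \<Rightarrow> bool" where
  "mgu_list \<sigma> ss ts \<longleftrightarrow> unifier_list \<sigma> ss ts \<and>
     (\<forall>\<tau>. unifier_list \<tau> ss ts \<longrightarrow> (\<exists>\<delta>. \<tau> = subst_comp \<sigma> \<delta>))"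

definition mgu :: "('f, 'v) subst \<Rightarrow> ('f, 'v) trm \<Rightarrow> ('f, 'v) trm \<Rightarrow> bool" where
  "mgu \<sigma> s t \<longleftrightarrow> mgu_list \<sigma> [s] [t]"

definition unifiable :: "('f, 'v) trm \<Rightarrow> ('f, 'v) trm \<Rightarrow> bool" where
  "unifiable s t \<longleftrightarrow> (\<exists>\<sigma>. subst_trm \<sigma> s = subst_trm \<sigma> t)"

(* A predicate symbol is identified by its name and arity (length of argument list).
   Goals are lists of atoms; the empty list is the goal true (neutral element of ","). *)
datatype ('p, 'f, 'v) atom =
    Eq "('f, 'v) trm" "('f, 'v) trm"
  | Neq "('f, 'v) trm" "('f, 'v) trm"
  | Pred 'p "('f, 'v) trm list"

type_synonym ('p, 'f, 'v) goal = "('p, 'f, 'v) atom list"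

(* clause A <- G with A non-basic: head (p, args), body G *)
type_synonym ('p, 'f, 'v) clause = "('p \<times> ('f, 'v) trm list) \<times> ('p, 'f, 'v) goal"

type_synonym ('p, 'f, 'v) program = "('p, 'f, 'v) clause set"

fun subst_atom :: "('f, 'v) subst \<Rightarrow> ('p, 'f, 'v) atom \<Rightarrow> ('p, 'f, 'v) atom" where
  "subst_atom \<sigma> (Eq s t) = Eq (subst_trm \<sigma> s) (subst_trm \<sigma> t)"
| "subst_atom \<sigma> (Neq s t) = Neq (subst_trm \<sigma> s) (subst_trm \<sigma> t)"
| "subst_atom \<sigma> (Pred p ts) = Pred p (map (subst_trm \<sigma>) ts)"

fun vars_atom :: "('p, 'f, 'v) atom \<Rightarrow> 'v set" where
  "vars_atom (Eq s t) = vars_trm s \<union> vars_trm t"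
| "vars_atom (Neq s t) = vars_trm s \<union> vars_trm t"
| "vars_atom (Pred p ts) = (\<Union>t\<in>set ts. vars_trm t)"

definition vars_goal :: "('p, 'f, 'v) goal \<Rightarrow> 'v set" where
  "vars_goal G = (\<Union>a\<in>set G. vars_atom a)"

definition subst_goal :: "('f, 'v) subst \<Rightarrow> ('p, 'f, 'v) goal \<Rightarrow> ('p, 'f, 'v) goal" where
  "subst_goal \<sigma> G = map (subst_atom \<sigma>) G"

definition rename_clause :: "('v \<Rightarrow> 'v) \<Rightarrow> ('p, 'f, 'v) clause \<Rightarrow> ('p, 'f, 'v) clause" where
  "rename_clause \<rho> C = (case C of ((p, ts), B) \<Rightarrow>
     ((p, map (subst_trm (Var \<circ> \<rho>)) ts), subst_goal (Var \<circ> \<rho>) B))"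

definition vars_clause :: "('p, 'f, 'v) clause \<Rightarrow> 'v set" where
  "vars_clause C = (case C of ((p, ts), B) \<Rightarrow> (\<Union>t\<in>set ts. vars_trm t) \<union> vars_goal B)"

definition renamed_apart :: "('p, 'f, 'v) program \<Rightarrow> ('p, 'f, 'v) goal \<Rightarrow> ('p, 'f, 'v) clause \<Rightarrow> bool" where
  "renamed_apart P G C' \<longleftrightarrow> (\<exists>C \<in> P. \<exists>\<rho>. bij \<rho> \<and> C' = rename_clause \<rho> C) \<and>
     vars_clause C' \<inter> vars_goal G = {}"

inductive step :: "('p, 'f, 'v) program \<Rightarrow> ('p, 'f, 'v) goal \<Rightarrow> ('p, 'f, 'v) goal \<Rightarrow> bool"
  for P where
  eq: "mgu \<theta> t1 t2 \<Longrightarrow> step P (Eq t1 t2 # G) (subst_goal \<theta> G)"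
| neq: "\<not> unifiable t1 t2 \<Longrightarrow> step P (Neq t1 t2 # G) G"
| res: "renamed_apart P (Pred p ts # G) ((q, us), B) \<Longrightarrow> p = q \<Longrightarrow> mgu_list \<theta> ts us \<Longrightarrow>
        step P (Pred p ts # G) (subst_goal \<theta> (B @ G))"

definition succeeds :: "('p, 'f, 'v) program \<Rightarrow> ('p, 'f, 'v) goal \<Rightarrow> bool" where
  "succeeds P G \<longleftrightarrow> (step P)\<^sup>*\<^sup>* G []"

definition ground_subst :: "('f, 'v) subst \<Rightarrow> bool" where
  "ground_subst \<sigma> \<longleftrightarrow> (\<forall>x. ground (\<sigma> x))"

definition holds_diseqs :: "('p, 'f, 'v) goal \<Rightarrow> bool" where
  "holds_diseqs D \<longleftrightarrow> (\<forall>a\<in>set D. \<exists>s t. a = Neq s t \<and> ground s \<and> ground t \<and> s \<noteq> t)"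

definition is_diseqs :: "('p, 'f, 'v) goal \<Rightarrow> bool" where
  "is_diseqs D \<longleftrightarrow> (\<forall>a\<in>set D. \<exists>s t. a = Neq s t)"

end

theory Submission
  imports Defs
begin

text \<open>The only rule applicable to a conjunction of disequations is the one for \<open>\<noteq>\<close>, so it
  succeeds iff none of its disequations is unifiable. Two terms are unifiable iff they have a
  ground unifier: composing any unifier with the substitution sending every variable to a
  constant yields one.\<close>

lemma subst_trm_subst_comp: "subst_trm (subst_comp \<sigma> \<tau>) t = subst_trm \<tau> (subst_trm \<sigma> t)"
  by (induction t) (auto simp: subst_comp_def)

lemma ground_subst_trm: "ground_subst \<sigma> \<Longrightarrow> ground (subst_trm \<sigma> t)"
  by (induction t) (auto simp: ground_subst_def ground_def)

lemma ground_subst_const: "ground_subst (\<lambda>_. Fun c [])"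
  by (simp add: ground_subst_def ground_def)

lemma ground_subst_subst_comp: "ground_subst \<tau> \<Longrightarrow> ground_subst (subst_comp \<sigma> \<tau>)"
  by (simp add: ground_subst_def subst_comp_def ground_subst_trm)

lemma unifiable_iff_ground_unifier:
  "unifiable s t \<longleftrightarrow> (\<exists>\<sigma>. ground_subst \<sigma> \<and> subst_trm \<sigma> s = subst_trm \<sigma> t)"
proof
  assume "unifiable s t"
  then obtain \<theta> where \<theta>: "subst_trm \<theta> s = subst_trm \<theta> t"
    by (auto simp: unifiable_def)
  fix c
  let ?\<gamma> = "subst_comp \<theta> (\<lambda>_. Fun c [])"
  have "ground_subst ?\<gamma>"
    by (rule ground_subst_subst_comp[OF ground_subst_const])
  moreover have "subst_trm ?\<gamma> s = subst_trm ?\<gamma> t"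
    using \<theta> by (simp add: subst_trm_subst_comp)
  ultimately show "\<exists>\<sigma>. ground_subst \<sigma> \<and> subst_trm \<sigma> s = subst_trm \<sigma> t"
    by blast
qed (auto simp: unifiable_def)

lemma succeeds_Neq_Cons:
  "succeeds P (Neq s t # G) \<longleftrightarrow> \<not> unifiable s t \<and> succeeds P G"
proof
  assume "succeeds P (Neq s t # G)"
  then have "(step P)\<^sup>*\<^sup>* (Neq s t # G) []"
    by (simp add: succeeds_def)
  then show "\<not> unifiable s t \<and> succeeds P G"
  proof (cases rule: converse_rtranclpE)
    case (step G')
    from step(1) show ?thesis
      by (cases rule: step.cases) (use step(2) in \<open>auto simp: succeeds_def\<close>)
  qed simp
next
  assume "\<not> unifiable s t \<and> succeeds P G"
  then show "succeeds P (Neq s t # G)"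
    unfolding succeeds_def by (meson converse_rtranclp_into_rtranclp step.neq)
qed

lemma succeeds_diseqs_iff:
  assumes "is_diseqs D"
  shows "succeeds P D \<longleftrightarrow> (\<forall>a\<in>set D. \<exists>s t. a = Neq s t \<and> \<not> unifiable s t)"
  using assms
proof (induction D)
  case Nil
  then show ?case by (simp add: succeeds_def)
next
  case (Cons a D)
  then obtain s t where "a = Neq s t" and "is_diseqs D"
    by (auto simp: is_diseqs_def)
  with Cons.IH show ?case by (auto simp: succeeds_Neq_Cons)
qed

lemma holds_diseqs_subst_goal_iff:
  assumes "is_diseqs D" and "ground_subst \<sigma>"
  shows "holds_diseqs (subst_goal \<sigma> D) \<longleftrightarrow>
    (\<forall>a\<in>set D. \<exists>s t. a = Neq s t \<and> subst_trm \<sigma> s \<noteq> subst_trm \<sigma> t)"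
  using assms ground_subst_trm[OF assms(2)]
  by (force simp: holds_diseqs_def is_diseqs_def subst_goal_def)

theorem lemma15:
  fixes P :: "('p, 'f, 'v) program" and D :: "('p, 'f, 'v) goal"
  assumes "infinite (UNIV :: 'f set)" and "infinite (UNIV :: 'v set)"
    and "is_diseqs D"
  shows "succeeds P D \<longleftrightarrow> (\<forall>\<sigma>. ground_subst \<sigma> \<longrightarrow> holds_diseqs (subst_goal \<sigma> D))"
proof -
  have "(\<forall>\<sigma>. ground_subst \<sigma> \<longrightarrow> holds_diseqs (subst_goal \<sigma> D)) \<longleftrightarrow>
    (\<forall>a\<in>set D. \<forall>\<sigma>. ground_subst \<sigma> \<longrightarrow> (\<exists>s t. a = Neq s t \<and> subst_trm \<sigma> s \<noteq> subst_trm \<sigma> t))"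
    using holds_diseqs_subst_goal_iff[OF assms(3)] by blast
  also have "\<dots> \<longleftrightarrow> (\<forall>a\<in>set D. \<exists>s t. a = Neq s t \<and> \<not> unifiable s t)"
    using assms(3)
    by (fastforce simp: is_diseqs_def unifiable_iff_ground_unifier)
  finally show ?thesis
    using succeeds_diseqs_iff[OF assms(3)] by simp
qed

end
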